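(* Let $\prec$ be a monomial order on $\langle x,x^*\rangle$ and let $I\subseteq\mathbb F\langle x,x^*\rangle$ be a $*$-ideal generated (as a $*$-ideal) by some nonzero analytic polynomials. Then the reduced Gröbner basis of $I$ with respect to $\prec$ is of the form $G\cup H^*$, where $G$ and $H$ consist entirely of analytic polynomials (and $H^*=\{h^*:h\in H\}$).
   Context: $\mathbb F\in\{\mathbb R,\mathbb C\}$. $\langle x,x^*\rangle$ is the free monoid of words in the letters $x_1,\dots,x_g,x_1^*,\dots,x_g^*$, and $\mathbb F\langle x,x^*\rangle$ the free $*$-algebra of polynomials in these letters (involution conjugates coefficients, reverses words, swaps $x_j\leftrightarrow x_j^*$). A polynomial is analytic if it contains no letter $x_j^*$. A $*$-ideal is a two-sided ideal with $I^*=I$. A monomial order is a total order $\prec$ on $\langle x,x^*\rangle$ that is a well-ordering and satisfies $a\prec b\Rightarrow ca\prec cb$ and $ac\prec bc$ for all words $c$. For nonzero $p=\sum_{i=1}^s c_it_i$ with $c_i\ne0$ and words $t_1\succ\dots\succ t_s$, $T(p)=t_1$ is the leading monomial and $c_1$ the leading coefficient; $p$ is monic if $c_1=1$. A word $a$ divides $b$ if $b=cad$ for words $c,d$. A reduced Gröbner basis of a two-sided ideal $I$ is a set $G\subseteq I$ such that: for each nonzero $f\in I$ some $g\in G$ has $T(g)$ dividing $T(f)$; every element of $G$ is monic; and for distinct $g_1,g_2\in G$, $T(g_1)$ divides no word appearing in $g_2$. Every two-sided ideal has a unique reduced Gröbner basis. *)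

theory Defs
  imports Complex_Main
begin

text \<open>Letters of the free *-monoid: (v, False) is x_v, (v, True) is x_v^*.
  The variable type 'v is finite (the g variables). Words are lists of letters.\<close>

type_synonym 'v word = "('v \<times> bool) list"

definition supp :: "('v word \<Rightarrow> 'a::zero) \<Rightarrow> 'v word set" where
  "supp p = {w. p w \<noteq> 0}"

definition polys :: "('v word \<Rightarrow> 'a::zero) set" where
  "polys = {p. finite (supp p)}"

definition pzero :: "'v word \<Rightarrow> 'a::zero" where
  "pzero = (\<lambda>w. 0)"

definition padd :: "('v word \<Rightarrow> 'a::plus) \<Rightarrow> ('v word \<Rightarrow> 'a) \<Rightarrow> 'v word \<Rightarrow> 'a" where
  "padd p q = (\<lambda>w. p w + q w)"

definition pmult :: "('v word \<Rightarrow> 'a::comm_ring_1) \<Rightarrow> ('v word \<Rightarrow> 'a) \<Rightarrow> 'v word \<Rightarrow> 'a" where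
  "pmult p q = (\<lambda>w. \<Sum>(u, v) \<in> {(u, v). u @ v = w}. p u * q v)"

definition star_letter :: "'v \<times> bool \<Rightarrow> 'v \<times> bool" where
  "star_letter l = (fst l, \<not> snd l)"

definition wstar :: "'v word \<Rightarrow> 'v word" where
  "wstar w = rev (map star_letter w)"

definition pstar :: "('a \<Rightarrow> 'a) \<Rightarrow> ('v word \<Rightarrow> 'a) \<Rightarrow> 'v word \<Rightarrow> 'a" where
  "pstar cj p = (\<lambda>w. cj (p (wstar w)))"

definition is_ideal :: "('v word \<Rightarrow> 'a::comm_ring_1) set \<Rightarrow> bool" where
  "is_ideal I \<longleftrightarrow> I \<subseteq> polys \<and> pzero \<in> I \<and>
     (\<forall>p\<in>I. \<forall>q\<in>I. padd p q \<in> I) \<and>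
     (\<forall>p\<in>I. \<forall>a\<in>polys. \<forall>b\<in>polys. pmult (pmult a p) b \<in> I)"

definition is_star_ideal :: "('a \<Rightarrow> 'a) \<Rightarrow> ('v word \<Rightarrow> 'a::comm_ring_1) set \<Rightarrow> bool" where
  "is_star_ideal cj I \<longleftrightarrow> is_ideal I \<and> pstar cj ` I \<subseteq> I"

definition star_ideal_generated ::
  "('a \<Rightarrow> 'a) \<Rightarrow> ('v word \<Rightarrow> 'a::comm_ring_1) set \<Rightarrow> ('v word \<Rightarrow> 'a) set" where
  "star_ideal_generated cj S = \<Inter> {I. is_star_ideal cj I \<and> S \<subseteq> I}"

definition analytic_poly :: "('v word \<Rightarrow> 'a::zero) \<Rightarrow> bool" where
  "analytic_poly p \<longleftrightarrow> (\<forall>w\<in>supp p. \<forall>l\<in>set w. \<not> snd l)"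

definition monomial_order :: "('v word \<Rightarrow> 'v word \<Rightarrow> bool) \<Rightarrow> bool" where
  "monomial_order lt \<longleftrightarrow>
     (\<forall>a. \<not> lt a a) \<and>
     (\<forall>a b c. lt a b \<longrightarrow> lt b c \<longrightarrow> lt a c) \<and>
     (\<forall>a b. a \<noteq> b \<longrightarrow> lt a b \<or> lt b a) \<and>
     wfP lt \<and>
     (\<forall>a b c. lt a b \<longrightarrow> lt (c @ a) (c @ b) \<and> lt (a @ c) (b @ c))"

definition lm :: "('v word \<Rightarrow> 'v word \<Rightarrow> bool) \<Rightarrow> ('v word \<Rightarrow> 'a::zero) \<Rightarrow> 'v word" where
  "lm lt p = (THE t. t \<in> supp p \<and> (\<forall>s\<in>supp p. s \<noteq> t \<longrightarrow> lt s t))"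

definition monic :: "('v word \<Rightarrow> 'v word \<Rightarrow> bool) \<Rightarrow> ('v word \<Rightarrow> 'a::{zero,one}) \<Rightarrow> bool" where
  "monic lt p \<longleftrightarrow> p \<noteq> pzero \<and> p (lm lt p) = 1"

definition word_dvd :: "'v word \<Rightarrow> 'v word \<Rightarrow> bool" where
  "word_dvd a b \<longleftrightarrow> (\<exists>c d. b = c @ a @ d)"

definition reduced_groebner_basis ::
  "('v word \<Rightarrow> 'v word \<Rightarrow> bool) \<Rightarrow> ('v word \<Rightarrow> 'a::comm_ring_1) set \<Rightarrow> ('v word \<Rightarrow> 'a) set \<Rightarrow> bool" where
  "reduced_groebner_basis lt I G \<longleftrightarrow>
     G \<subseteq> I \<and>
     (\<forall>f\<in>I. f \<noteq> pzero \<longrightarrow> (\<exists>g\<in>G. word_dvd (lm lt g) (lm lt f))) \<and>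
     (\<forall>g\<in>G. monic lt g) \<and>
     (\<forall>g1\<in>G. \<forall>g2\<in>G. g1 \<noteq> g2 \<longrightarrow> (\<forall>w\<in>supp g2. \<not> word_dvd (lm lt g1) w))"

end

theory Submission
  imports Defs
begin

text \<open>The *-ideal \<open>I\<close> is generated by analytic polynomials and their adjoints, which are
  anti-analytic; call such polynomials pure. Call a word standard if it is not divisible by the
  leading word of any pure element of \<open>I\<close>. Modulo \<open>I\<close>, every pure word reduces to a combination
  of standard words of the same kind. With these normal forms the free algebra acts from the right
  on the span of the standard words: a letter only rewrites the longest tail of the word made of
  letters of its own kind. The generators act trivially, hence so does all of \<open>I\<close>, and acting on
  the empty word shows that no element of \<open>I\<close> has a standard leading word. Consequently every
  element \<open>g\<close> of the reduced Groebner basis has a pure leading word \<open>t\<close>, and \<open>g\<close> is \<open>t\<close> minus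
  the normal form of \<open>t\<close>, a pure polynomial.\<close>

section \<open>Polynomials as finitely supported coefficient functions\<close>

definition pmonom :: "'v word \<Rightarrow> 'v word \<Rightarrow> 'a::{zero,one}" where
  "pmonom w = (\<lambda>u. if u = w then 1 else 0)"

definition pscale :: "'a::times \<Rightarrow> ('v word \<Rightarrow> 'a) \<Rightarrow> 'v word \<Rightarrow> 'a" where
  "pscale c f = (\<lambda>w. c * f w)"

definition psub :: "('v word \<Rightarrow> 'a::minus) \<Rightarrow> ('v word \<Rightarrow> 'a) \<Rightarrow> 'v word \<Rightarrow> 'a" where
  "psub p q = (\<lambda>w. p w - q w)"

definition lincomb ::
  "('v word \<Rightarrow> 'a::comm_ring_1) \<Rightarrow> ('v word \<Rightarrow> 'v word \<Rightarrow> 'a) \<Rightarrow> 'v word \<Rightarrow> 'a" where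
  "lincomb f \<Psi> = (\<lambda>x. \<Sum>u\<in>supp f. f u * \<Psi> u x)"

lemma in_supp_iff: "w \<in> supp f \<longleftrightarrow> f w \<noteq> 0"
  by (simp add: supp_def)

lemma pzero_iff_supp_empty: "p = pzero \<longleftrightarrow> supp p = {}"
  by (auto simp: in_supp_iff pzero_def fun_eq_iff)

lemma supp_pzero [simp]: "supp pzero = {}"
  by (simp add: pzero_iff_supp_empty[symmetric])

lemma supp_pmonom: "supp (pmonom w :: _ \<Rightarrow> 'a::zero_neq_one) = {w}"
  by (auto simp: in_supp_iff pmonom_def split: if_splits)

lemma finite_supp_pmonom [simp]: "finite (supp (pmonom w :: _ \<Rightarrow> 'a::zero_neq_one))"
  by (simp add: supp_pmonom)

lemma pmonom_polys [simp]: "(pmonom w :: _ \<Rightarrow> 'a::zero_neq_one) \<in> polys"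
  by (simp add: polys_def)

lemma supp_padd: "supp (padd f g :: _ \<Rightarrow> 'a::monoid_add) \<subseteq> supp f \<union> supp g"
  by (auto simp: in_supp_iff padd_def)

lemma supp_psub: "supp (psub f g :: _ \<Rightarrow> 'a::group_add) \<subseteq> supp f \<union> supp g"
  by (auto simp: in_supp_iff psub_def)

lemma supp_pscale: "supp (pscale c f :: _ \<Rightarrow> 'a::mult_zero) \<subseteq> supp f"
  by (auto simp: in_supp_iff pscale_def)

lemma finite_supp_padd:
  "finite (supp f) \<Longrightarrow> finite (supp g) \<Longrightarrow> finite (supp (padd f g :: _ \<Rightarrow> 'a::monoid_add))"
  by (meson finite_UnI finite_subset supp_padd)

lemma finite_supp_psub:
  "finite (supp f) \<Longrightarrow> finite (supp g) \<Longrightarrow> finite (supp (psub f g :: _ \<Rightarrow> 'a::group_add))"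
  by (meson finite_UnI finite_subset supp_psub)

lemma finite_supp_pscale: "finite (supp f) \<Longrightarrow> finite (supp (pscale c f :: _ \<Rightarrow> 'a::mult_zero))"
  by (meson finite_subset supp_pscale)

lemma psub_pzero [simp]: "psub p pzero = (p :: _ \<Rightarrow> 'a::group_add)"
  by (simp add: psub_def pzero_def)

lemma psub_self [simp]: "psub p p = (pzero :: _ \<Rightarrow> 'a::group_add)"
  by (simp add: psub_def pzero_def)

lemma lincomb_eq_sum_superset:
  assumes "finite A" "supp f \<subseteq> A"
  shows "lincomb f \<Psi> x = (\<Sum>u\<in>A. f u * \<Psi> u x)"
  unfolding lincomb_def
  by (rule sum.mono_neutral_left) (use assms in \<open>auto simp: in_supp_iff\<close>)

lemma lincomb_padd:
  assumes "finite (supp f)" "finite (supp g)"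
  shows "lincomb (padd f g) \<Psi> = padd (lincomb f \<Psi>) (lincomb g \<Psi>)"
proof
  fix x
  let ?A = "supp f \<union> supp g"
  have "finite ?A" using assms by simp
  then show "lincomb (padd f g) \<Psi> x = padd (lincomb f \<Psi>) (lincomb g \<Psi>) x"
    using supp_padd[of f g]
    by (simp add: lincomb_eq_sum_superset[of ?A] padd_def distrib_right sum.distrib)
qed

lemma lincomb_pscale:
  assumes "finite (supp f)"
  shows "lincomb (pscale c f) \<Psi> = pscale c (lincomb f \<Psi>)"
proof
  fix x
  show "lincomb (pscale c f) \<Psi> x = pscale c (lincomb f \<Psi>) x"
    using assms supp_pscale[of c f]
    by (simp add: lincomb_eq_sum_superset[of "supp f"] pscale_def sum_distrib_left mult.assoc)
qed

lemma lincomb_pmonom: "lincomb (pmonom w) \<Psi> = (\<Psi> w :: _ \<Rightarrow> 'a::comm_ring_1)"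
  by (rule ext, subst lincomb_eq_sum_superset[of "{w}"]) (auto simp: in_supp_iff pmonom_def split: if_splits)

lemma lincomb_pmonom_right:
  assumes "finite (supp f)"
  shows "lincomb f pmonom = f"
proof
  fix x
  show "lincomb f pmonom x = f x"
    using assms
    by (cases "x \<in> supp f") (auto simp: lincomb_def pmonom_def if_distrib in_supp_iff
          cong: if_cong intro!: sum.neutral)
qed

lemma lincomb_pzero [simp]: "lincomb pzero \<Psi> = pzero"
  by (simp add: lincomb_def pzero_def)

lemma lincomb_cong: "(\<And>u. u \<in> supp f \<Longrightarrow> \<Psi> u = \<Phi> u) \<Longrightarrow> lincomb f \<Psi> = lincomb f \<Phi>"
  unfolding lincomb_def by (intro ext sum.cong) auto

lemma lincomb_eq_pzero: "(\<And>u. u \<in> supp f \<Longrightarrow> \<Psi> u = pzero) \<Longrightarrow> lincomb f \<Psi> = pzero"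
  by (simp add: lincomb_def pzero_def)

lemma psub_lincomb: "psub (lincomb f \<Psi>) (lincomb f \<Phi>) = lincomb f (\<lambda>u. psub (\<Psi> u) (\<Phi> u))"
  by (simp add: psub_def lincomb_def sum_subtractf right_diff_distrib)

lemma supp_lincomb: "supp (lincomb f \<Psi>) \<subseteq> (\<Union>u\<in>supp f. supp (\<Psi> u))"
proof
  fix x assume "x \<in> supp (lincomb f \<Psi>)"
  then have "(\<Sum>u\<in>supp f. f u * \<Psi> u x) \<noteq> 0" by (simp add: in_supp_iff lincomb_def)
  then obtain u where "u \<in> supp f" "f u * \<Psi> u x \<noteq> 0" by (meson sum.neutral)
  then show "x \<in> (\<Union>u\<in>supp f. supp (\<Psi> u))" by (intro UN_I[of u]) (auto simp: in_supp_iff)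
qed

lemma finite_supp_lincomb:
  assumes "finite (supp f)" "\<And>u. u \<in> supp f \<Longrightarrow> finite (supp (\<Psi> u))"
  shows "finite (supp (lincomb f \<Psi>))"
  using supp_lincomb[of f \<Psi>] assms by (meson finite_UN_I finite_subset)

lemma lincomb_lincomb:
  assumes "finite (supp f)" "\<And>u. u \<in> supp f \<Longrightarrow> finite (supp (\<Psi> u))"
  shows "lincomb (lincomb f \<Psi>) \<Theta> = lincomb f (\<lambda>u. lincomb (\<Psi> u) \<Theta>)"
proof
  fix x
  define A where "A = (\<Union>u\<in>supp f. supp (\<Psi> u))"
  have A: "finite A" using assms by (simp add: A_def)
  have "lincomb (lincomb f \<Psi>) \<Theta> x = (\<Sum>y\<in>A. \<Sum>u\<in>supp f. f u * \<Psi> u y * \<Theta> y x)"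
    using A supp_lincomb[of f \<Psi>]
    by (simp add: lincomb_eq_sum_superset[of A] A_def) (simp add: lincomb_def sum_distrib_right)
  also have "\<dots> = (\<Sum>u\<in>supp f. f u * (\<Sum>y\<in>A. \<Psi> u y * \<Theta> y x))"
    by (subst sum.swap) (simp add: sum_distrib_left mult.assoc)
  also have "\<dots> = lincomb f (\<lambda>u. lincomb (\<Psi> u) \<Theta>) x"
  proof -
    have "lincomb (\<Psi> u) \<Theta> x = (\<Sum>y\<in>A. \<Psi> u y * \<Theta> y x)" if "u \<in> supp f" for u
      by (rule lincomb_eq_sum_superset) (use A that in \<open>auto simp: A_def\<close>)
    then show ?thesis by (simp add: lincomb_def)
  qed
  finally show "lincomb (lincomb f \<Psi>) \<Theta> x = lincomb f (\<lambda>u. lincomb (\<Psi> u) \<Theta>) x" .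
qed

lemma lincomb_swap:
  "lincomb f (\<lambda>u. lincomb g (\<Theta> u)) = lincomb g (\<lambda>w. lincomb f (\<lambda>u. \<Theta> u w))"
  unfolding lincomb_def
  by (rule ext) (simp add: sum_distrib_left mult.left_commute sum.swap[of _ "supp f"])

lemma finite_factorizations: "finite {(u, v). u @ v = w}"
proof -
  have "{(u, v). u @ v = w} \<subseteq> (\<lambda>i. (take i w, drop i w)) ` {..length w}"
  proof
    fix x assume "x \<in> {(u, v). u @ v = w}"
    then obtain u v where "x = (u, v)" "u @ v = w" by auto
    then show "x \<in> (\<lambda>i. (take i w, drop i w)) ` {..length w}"
      by (auto intro!: image_eqI[where x="length u"])
  qed
  then show ?thesis by (rule finite_subset) simp
qed

lemma pmult_eq_lincomb:
  assumes "finite (supp f)" "finite (supp g)"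
  shows "pmult f g = lincomb f (\<lambda>u. lincomb g (\<lambda>v. pmonom (u @ v)))"
proof
  fix x
  have "pmult f g x = (\<Sum>(u, v)\<in>{(u, v). u @ v = x} \<inter> (supp f \<times> supp g). f u * g v)"
    unfolding pmult_def
    by (rule sum.mono_neutral_right) (auto simp: finite_factorizations in_supp_iff)
  also have "\<dots> = (\<Sum>(u, v)\<in>supp f \<times> supp g. if u @ v = x then f u * g v else 0)"
    by (subst Int_commute, subst sum.inter_restrict) (auto simp: assms intro!: sum.cong)
  also have "\<dots> = lincomb f (\<lambda>u. lincomb g (\<lambda>v. pmonom (u @ v))) x"
    by (auto simp: sum.cartesian_product[symmetric] lincomb_def pmonom_def sum_distrib_left
        if_distrib intro!: sum.cong)
  finally show "pmult f g x = lincomb f (\<lambda>u. lincomb g (\<lambda>v. pmonom (u @ v))) x" .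
qed

lemma finite_supp_pmult:
  "finite (supp f) \<Longrightarrow> finite (supp g) \<Longrightarrow> finite (supp (pmult f g))"
  by (simp add: pmult_eq_lincomb finite_supp_lincomb)

lemma pmult_pmonom_left:
  "finite (supp p) \<Longrightarrow> pmult (pmonom c) p = lincomb p (\<lambda>u. pmonom (c @ u))"
  by (simp add: pmult_eq_lincomb lincomb_pmonom)

lemma pmult_pmonom_right:
  "finite (supp p) \<Longrightarrow> pmult p (pmonom d) = lincomb p (\<lambda>u. pmonom (u @ d))"
  by (simp add: pmult_eq_lincomb lincomb_pmonom)

lemma pmult_eq_lincomb_pmult_pmonom:
  "finite (supp r) \<Longrightarrow> finite (supp p) \<Longrightarrow> pmult r p = lincomb p (\<lambda>u. pmult r (pmonom u))"
  by (simp add: pmult_eq_lincomb lincomb_swap[of r p] lincomb_pmonom)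

lemma pmult_psub_left: "pmult (psub f g) h = psub (pmult f h) (pmult g h)"
  by (simp add: pmult_def psub_def left_diff_distrib sum_subtractf case_prod_beta)

lemma pmult_pmonom_pmonom:
  assumes "finite (supp r)"
  shows "pmult (pmult r (pmonom u)) (pmonom v) = pmult r (pmonom (u @ v))"
proof -
  have "finite (supp (lincomb r (\<lambda>z. pmonom (z @ u))))"
    using assms by (intro finite_supp_lincomb) auto
  then show ?thesis using assms by (simp add: pmult_pmonom_right lincomb_lincomb lincomb_pmonom)
qed

section \<open>Divisibility of words and monomial orders\<close>

lemma word_dvd_refl [simp]: "word_dvd a a"
  unfolding word_dvd_def by (rule exI[of _ "[]"], rule exI[of _ "[]"]) simp

lemma word_dvd_Nil [simp]: "word_dvd [] a"
  unfolding word_dvd_def by auto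

lemma word_dvd_trans: "word_dvd a b \<Longrightarrow> word_dvd b c \<Longrightarrow> word_dvd a c"
  unfolding word_dvd_def by (metis append_assoc)

lemma word_dvd_antisym:
  assumes "word_dvd a b" "word_dvd b a"
  shows "a = b"
proof -
  obtain c d c' d' where b: "b = c @ a @ d" and a: "a = c' @ b @ d'"
    using assms unfolding word_dvd_def by blast
  have "length b = length c + length a + length d" "length a = length c' + length b + length d'"
    using arg_cong[OF b, of length] arg_cong[OF a, of length] by (simp_all only: length_append)
  then have "length c = 0 \<and> length d = 0" by linarith
  then show ?thesis using b by simp
qed

locale monomial_ordered =
  fixes lt :: "'v word \<Rightarrow> 'v word \<Rightarrow> bool"
  assumes monomial_order: "monomial_order lt"
begin

lemma lt_irrefl: "\<not> lt a a"
  using monomial_order by (simp add: monomial_order_def)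

lemma lt_trans:
  assumes "lt a b" "lt b c"
  shows "lt a c"
proof -
  have "\<forall>a b c. lt a b \<longrightarrow> lt b c \<longrightarrow> lt a c"
    using monomial_order by (simp add: monomial_order_def)
  with assms show ?thesis by blast
qed

lemma lt_asym: "lt a b \<Longrightarrow> \<not> lt b a"
  using lt_trans lt_irrefl by blast

lemma lt_total: "a \<noteq> b \<Longrightarrow> lt a b \<or> lt b a"
  using monomial_order by (simp add: monomial_order_def)

lemma wfp_lt: "wfP lt"
  using monomial_order by (simp add: monomial_order_def)

lemma lt_append_left: "lt a b \<Longrightarrow> lt (c @ a) (c @ b)"
  using monomial_order by (simp add: monomial_order_def)

lemma lt_append_right: "lt a b \<Longrightarrow> lt (a @ c) (b @ c)"
  using monomial_order by (simp add: monomial_order_def)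

lemma lt_append_both: "lt a b \<Longrightarrow> lt (c @ a @ d) (c @ b @ d)"
  using lt_append_left lt_append_right by blast

text \<open>Otherwise \<open>c\<^sup>n\<close> would be an infinite descending chain.\<close>

lemma not_lt_Nil: "\<not> lt c []"
proof
  assume c: "lt c []"
  define f where "f n = concat (replicate n c)" for n
  have "lt (f (Suc n)) (f n)" for n
    using lt_append_left[OF c, of "f n"] by (simp add: f_def replicate_append_same[symmetric])
  then show False
    using wfp_lt wf_iff_no_infinite_down_chain[of "{(x, y). lt x y}"] by (auto simp: wfp_def)
qed

lemma word_dvd_imp_le: "word_dvd t s \<Longrightarrow> t = s \<or> lt t s"
proof -
  have Nil_le: "c = [] \<or> lt [] c" for c using not_lt_Nil lt_total by blast
  have le_append: "t = c @ t @ d \<or> lt t (c @ t @ d)" for c d :: "'v word"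
  proof -
    have "t = c @ t \<or> lt t (c @ t)"
      using Nil_le[of c] lt_append_right[of "[]" c t] by auto
    moreover have "c @ t = c @ t @ d \<or> lt (c @ t) (c @ t @ d)"
      using Nil_le[of d] lt_append_left[of "[]" d "c @ t"] by auto
    ultimately show ?thesis using lt_trans[of t "c @ t" "c @ t @ d"] by auto
  qed
  show "word_dvd t s \<Longrightarrow> t = s \<or> lt t s" unfolding word_dvd_def using le_append by blast
qed

lemma finite_has_lt_max: "finite A \<Longrightarrow> A \<noteq> {} \<Longrightarrow> \<exists>t\<in>A. \<forall>s\<in>A. s \<noteq> t \<longrightarrow> lt s t"
proof (induction A rule: finite_ne_induct)
  case (insert x F)
  then obtain t where t: "t \<in> F" "\<forall>s\<in>F. s \<noteq> t \<longrightarrow> lt s t" by blast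
  show ?case
  proof (cases "lt t x")
    case True
    have "lt s x" if "s \<in> F" for s
      using t that lt_trans[OF _ True] True by (cases "s = t") auto
    then show ?thesis by blast
  next
    case False
    have "lt x t" if "x \<noteq> t" using lt_total[OF that] False by blast
    then show ?thesis using t by blast
  qed
qed auto

lemma lm_eqI:
  assumes "t \<in> supp p" "\<forall>s\<in>supp p. s \<noteq> t \<longrightarrow> lt s t"
  shows "lm lt p = t"
  unfolding lm_def
proof (rule the_equality)
  fix u assume u: "u \<in> supp p \<and> (\<forall>s\<in>supp p. s \<noteq> u \<longrightarrow> lt s u)"
  show "u = t"
  proof (rule ccontr)
    assume "u \<noteq> t"
    then have "lt u t" "lt t u" using u assms by auto
    then show False using lt_asym by blast
  qed
qed (use assms in blast)

lemma
  assumes "finite (supp p)" "p \<noteq> pzero"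
  shows lm_in_supp: "lm lt p \<in> supp p"
    and lt_lm: "s \<in> supp p \<Longrightarrow> s \<noteq> lm lt p \<Longrightarrow> lt s (lm lt p)"
proof -
  obtain t where t: "t \<in> supp p" "\<forall>s\<in>supp p. s \<noteq> t \<longrightarrow> lt s t"
    using finite_has_lt_max[of "supp p"] assms by (auto simp: pzero_iff_supp_empty)
  then have "lm lt p = t" by (rule lm_eqI)
  then show "lm lt p \<in> supp p" "s \<in> supp p \<Longrightarrow> s \<noteq> lm lt p \<Longrightarrow> lt s (lm lt p)"
    using t by auto
qed

end

section \<open>The involution and *-ideals\<close>

lemma wstar_wstar [simp]: "wstar (wstar w) = w"
  by (simp add: wstar_def rev_map star_letter_def comp_def)

lemma wstar_append: "wstar (u @ v) = wstar v @ wstar u"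
  by (simp add: wstar_def)

lemma append_eq_wstar_iff: "u @ v = wstar w \<longleftrightarrow> wstar v @ wstar u = w"
  by (metis wstar_append wstar_wstar)

lemma set_wstar: "set (wstar w) = star_letter ` set w"
  by (simp add: wstar_def)

locale conjugation =
  fixes cj :: "'a::field \<Rightarrow> 'a"
  assumes cj_add: "cj (a + b) = cj a + cj b"
    and cj_mult: "cj (a * b) = cj a * cj b"
    and cj_cj [simp]: "cj (cj a) = a"
begin

lemma cj_0 [simp]: "cj 0 = 0"
  using cj_add[of 0 0] by (metis add_cancel_right_right)

lemma cj_eq_0_iff [simp]: "cj a = 0 \<longleftrightarrow> a = 0"
  by (metis cj_0 cj_cj)

lemma cj_sum: "cj (sum f A) = (\<Sum>x\<in>A. cj (f x))"
  by (induction A rule: infinite_finite_induct) (auto simp: cj_add)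

lemma supp_pstar: "supp (pstar cj p) = wstar ` supp p"
proof (rule set_eqI)
  fix w
  show "w \<in> supp (pstar cj p) \<longleftrightarrow> w \<in> wstar ` supp p"
    by (auto simp: in_supp_iff pstar_def image_iff intro!: bexI[where x="wstar w"])
qed

lemma pstar_pstar [simp]: "pstar cj (pstar cj p) = p"
  by (simp add: pstar_def)

lemma pstar_polys: "p \<in> polys \<Longrightarrow> pstar cj p \<in> polys"
  by (simp add: polys_def supp_pstar)

lemma pstar_padd: "pstar cj (padd p q) = padd (pstar cj p) (pstar cj q)"
  by (simp add: pstar_def padd_def cj_add)

lemma pstar_pzero [simp]: "pstar cj pzero = pzero"
  by (simp add: pstar_def pzero_def)

lemma pstar_pmult: "pstar cj (pmult f g) = pmult (pstar cj g) (pstar cj f)"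
proof
  fix w
  have "pstar cj (pmult f g) w = (\<Sum>(u, v)\<in>{(u, v). u @ v = wstar w}. cj (f u) * cj (g v))"
    by (simp add: pstar_def pmult_def cj_sum case_prod_beta cj_mult)
  also have "\<dots> = (\<Sum>(u, v)\<in>{(u, v). u @ v = w}. cj (g (wstar u)) * cj (f (wstar v)))"
    by (rule sum.reindex_bij_witness[where i="\<lambda>(u, v). (wstar v, wstar u)"
          and j="\<lambda>(u, v). (wstar v, wstar u)"]) (auto simp: append_eq_wstar_iff mult.commute)
  also have "\<dots> = pmult (pstar cj g) (pstar cj f) w"
    by (simp add: pmult_def pstar_def case_prod_beta)
  finally show "pstar cj (pmult f g) w = pmult (pstar cj g) (pstar cj f) w" .
qed

end

locale two_sided_ideal =
  fixes I :: "('v word \<Rightarrow> 'a::comm_ring_1) set"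
  assumes is_ideal: "is_ideal I"
begin

lemma finite_supp_mem: "p \<in> I \<Longrightarrow> finite (supp p)"
  using is_ideal by (auto simp: is_ideal_def polys_def)

lemma pzero_mem: "pzero \<in> I"
  using is_ideal by (simp add: is_ideal_def)

lemma padd_mem: "p \<in> I \<Longrightarrow> q \<in> I \<Longrightarrow> padd p q \<in> I"
  using is_ideal by (simp add: is_ideal_def)

lemma pmult_mem: "p \<in> I \<Longrightarrow> a \<in> polys \<Longrightarrow> b \<in> polys \<Longrightarrow> pmult (pmult a p) b \<in> I"
  using is_ideal by (simp add: is_ideal_def)

lemma pmult_pmonom_pmonom_mem:
  assumes "p \<in> I"
  shows "lincomb p (\<lambda>u. pmonom (c @ u @ d)) \<in> I"
proof -
  have p: "finite (supp p)" using assms by (rule finite_supp_mem)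
  have "pmult (pmonom c) p = lincomb p (\<lambda>v. pmonom (c @ v))"
    using p by (simp add: pmult_eq_lincomb lincomb_pmonom)
  moreover have "finite (supp (lincomb p (\<lambda>v. pmonom (c @ v))))"
    using p by (intro finite_supp_lincomb) auto
  ultimately have "pmult (pmult (pmonom c) p) (pmonom d) = lincomb p (\<lambda>u. pmonom (c @ u @ d))"
    using p by (simp add: pmult_eq_lincomb lincomb_lincomb lincomb_pmonom)
  then show ?thesis using pmult_mem[OF assms] by (metis pmonom_polys)
qed

lemma pscale_mem: "p \<in> I \<Longrightarrow> pscale c p \<in> I"
  using pmult_mem[of p "pscale c (pmonom [])" "pmonom []"] finite_supp_mem[of p]
  by (simp add: polys_def finite_supp_pscale pmult_eq_lincomb lincomb_pscale lincomb_pmonom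
      lincomb_pmonom_right)

lemma psub_mem: "p \<in> I \<Longrightarrow> q \<in> I \<Longrightarrow> psub p q \<in> I"
proof -
  assume "p \<in> I" "q \<in> I"
  moreover have "psub p q = padd p (pscale (-1) q)"
    by (simp add: padd_def pscale_def psub_def)
  ultimately show "psub p q \<in> I" by (simp add: padd_mem pscale_mem)
qed

lemma lincomb_mem:
  assumes "finite (supp f)" "\<And>u. u \<in> supp f \<Longrightarrow> \<Psi> u \<in> I"
  shows "lincomb f \<Psi> \<in> I"
proof -
  have "(\<lambda>x. \<Sum>u\<in>A. f u * \<Psi> u x) \<in> I" if "finite A" "A \<subseteq> supp f" for A
    using that
  proof (induction A rule: finite_induct)
    case empty
    then show ?case using pzero_mem by (simp add: pzero_def)
  next
    case (insert a A)
    then have "padd (pscale (f a) (\<Psi> a)) (\<lambda>x. \<Sum>u\<in>A. f u * \<Psi> u x) \<in> I"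
      using assms(2) by (intro padd_mem pscale_mem) auto
    then show ?case using insert by (simp add: padd_def pscale_def)
  qed
  then show ?thesis using assms(1) by (simp add: lincomb_def)
qed

lemma pmult_pmonom_right_mem: "p \<in> I \<Longrightarrow> pmult p (pmonom d) \<in> I"
  using pmult_pmonom_pmonom_mem[of p "[]" d] by (simp add: pmult_pmonom_right finite_supp_mem)

end

context conjugation
begin

lemma polys_star_ideal: "is_star_ideal cj polys"
  by (auto simp: is_star_ideal_def is_ideal_def polys_def finite_supp_padd finite_supp_pmult
      supp_pstar)

lemma star_ideal_generated:
  assumes "S \<subseteq> polys"
  shows "is_star_ideal cj (star_ideal_generated cj S)"
proof -
  define F where "F = {J. is_star_ideal cj J \<and> S \<subseteq> J}"
  have polys: "polys \<in> F" using assms polys_star_ideal by (simp add: F_def)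
  have closed: "pzero \<in> J" "p \<in> J \<Longrightarrow> q \<in> J \<Longrightarrow> padd p q \<in> J"
    "p \<in> J \<Longrightarrow> a \<in> polys \<Longrightarrow> b \<in> polys \<Longrightarrow> pmult (pmult a p) b \<in> J"
    "p \<in> J \<Longrightarrow> pstar cj p \<in> J" if "J \<in> F" for J p q a b
    using that by (auto simp: F_def is_star_ideal_def is_ideal_def)
  have sub: "\<Inter> F \<subseteq> polys" using polys by blast
  have zero: "pzero \<in> \<Inter> F" using closed(1) by blast
  have add: "padd p q \<in> \<Inter> F" if "p \<in> \<Inter> F" "q \<in> \<Inter> F" for p q
    using that closed(2) by blast
  have mult: "pmult (pmult a p) b \<in> \<Inter> F" if "p \<in> \<Inter> F" "a \<in> polys" "b \<in> polys" for p a b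
    using that closed(3) by blast
  have star: "pstar cj p \<in> \<Inter> F" if "p \<in> \<Inter> F" for p
    using that closed(4) by blast
  show ?thesis
    unfolding star_ideal_generated_def F_def[symmetric] unfolding is_star_ideal_def is_ideal_def
    by (intro conjI ballI image_subsetI sub zero add mult star; assumption)
qed

lemma subset_star_ideal_generated: "S \<subseteq> star_ideal_generated cj S"
  by (auto simp: star_ideal_generated_def)

lemma star_ideal_generated_least:
  "is_star_ideal cj K \<Longrightarrow> S \<subseteq> K \<Longrightarrow> star_ideal_generated cj S \<subseteq> K"
  by (auto simp: star_ideal_generated_def)

end

section \<open>Pure words and polynomials\<close>

definition pure_word :: "bool \<Rightarrow> 'v word \<Rightarrow> bool" where
  "pure_word b w \<longleftrightarrow> (\<forall>l\<in>set w. snd l = b)"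

definition pure_poly :: "bool \<Rightarrow> ('v word \<Rightarrow> 'a::zero) \<Rightarrow> bool" where
  "pure_poly b p \<longleftrightarrow> (\<forall>w\<in>supp p. pure_word b w)"

lemma analytic_poly_iff_pure_poly: "analytic_poly p \<longleftrightarrow> pure_poly False p"
  by (simp add: analytic_poly_def pure_poly_def pure_word_def)

lemma pure_word_append [simp]: "pure_word b (u @ v) \<longleftrightarrow> pure_word b u \<and> pure_word b v"
  by (auto simp: pure_word_def)

lemma pure_word_wstar [simp]: "pure_word b (wstar w) \<longleftrightarrow> pure_word (\<not> b) w"
  by (auto simp: pure_word_def set_wstar star_letter_def)

lemma pure_word_dvd: "word_dvd t s \<Longrightarrow> pure_word b s \<Longrightarrow> pure_word b t"
  by (auto simp: word_dvd_def)

lemma pure_poly_pzero [simp]: "pure_poly b pzero"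
  by (simp add: pure_poly_def)

lemma pure_poly_pmonom: "pure_word b w \<Longrightarrow> pure_poly b (pmonom w :: _ \<Rightarrow> 'a::zero_neq_one)"
  by (simp add: pure_poly_def supp_pmonom)

lemma pure_poly_psub:
  "pure_poly b p \<Longrightarrow> pure_poly b q \<Longrightarrow> pure_poly b (psub p q :: _ \<Rightarrow> 'a::group_add)"
  using supp_psub[of p q] by (auto simp: pure_poly_def)

lemma pure_poly_lincomb: "(\<And>u. u \<in> supp f \<Longrightarrow> pure_poly b (\<Psi> u)) \<Longrightarrow> pure_poly b (lincomb f \<Psi>)"
  using supp_lincomb[of f \<Psi>] by (auto simp: pure_poly_def)

lemma (in conjugation) pure_poly_pstar: "pure_poly b p \<Longrightarrow> pure_poly (\<not> b) (pstar cj p)"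
  by (auto simp: pure_poly_def supp_pstar)

definition pure_suffix :: "bool \<Rightarrow> 'v word \<Rightarrow> 'v word" where
  "pure_suffix b w = rev (takeWhile (\<lambda>l. snd l = b) (rev w))"

definition strip_pure_suffix :: "bool \<Rightarrow> 'v word \<Rightarrow> 'v word" where
  "strip_pure_suffix b w = rev (dropWhile (\<lambda>l. snd l = b) (rev w))"

abbreviation ends_impure :: "bool \<Rightarrow> 'v word \<Rightarrow> bool" where
  "ends_impure b w \<equiv> w = [] \<or> snd (last w) \<noteq> b"

lemma strip_pure_suffix_append_pure_suffix [simp]:
  "strip_pure_suffix b w @ pure_suffix b w = w"
  unfolding strip_pure_suffix_def pure_suffix_def by (metis rev_append rev_rev_ident takeWhile_dropWhile_id)

lemma word_dvd_pure_suffix: "word_dvd (pure_suffix b w) w"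
  unfolding word_dvd_def by (metis append_Nil2 strip_pure_suffix_append_pure_suffix)

lemma word_dvd_strip_pure_suffix: "word_dvd (strip_pure_suffix b w) w"
  unfolding word_dvd_def by (metis append_Nil strip_pure_suffix_append_pure_suffix)

lemma pure_word_pure_suffix: "pure_word b (pure_suffix b w)"
  by (auto simp: pure_suffix_def pure_word_def dest: set_takeWhileD)

lemma ends_impure_strip_pure_suffix: "ends_impure b (strip_pure_suffix b w)"
proof (cases "dropWhile (\<lambda>l. snd l = b) (rev w) = []")
  case False
  then show ?thesis using hd_dropWhile[OF False] by (simp add: strip_pure_suffix_def last_rev)
qed (simp add: strip_pure_suffix_def)

lemma
  assumes "ends_impure b x" "pure_word b u"
  shows pure_suffix_append: "pure_suffix b (x @ u) = u"
    and strip_pure_suffix_append: "strip_pure_suffix b (x @ u) = x"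
proof -
  have x: "takeWhile (\<lambda>l. snd l = b) (rev x) = [] \<and> dropWhile (\<lambda>l. snd l = b) (rev x) = rev x"
    using assms(1) by (cases x rule: rev_cases) auto
  have u: "\<And>l. l \<in> set (rev u) \<Longrightarrow> snd l = b" using assms(2) by (simp add: pure_word_def)
  show "pure_suffix b (x @ u) = u"
    using x takeWhile_append2[of "rev u" _ "rev x", OF u] by (simp add: pure_suffix_def)
  show "strip_pure_suffix b (x @ u) = x"
    using x dropWhile_append2[of "rev u" _ "rev x", OF u] by (simp add: strip_pure_suffix_def)
qed

lemma word_dvd_append_pure:
  assumes t: "pure_word b' t" and y: "pure_word b y" and x: "ends_impure b x"
    and xy: "x @ y = c @ t @ d"
  shows "word_dvd t x \<or> word_dvd t y"
proof -
  obtain us where "(x = c @ us \<and> us @ y = t @ d) \<or> (x @ us = c \<and> y = us @ t @ d)"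
    using xy by (auto simp: append_eq_append_conv2)
  then show ?thesis
  proof
    assume "x @ us = c \<and> y = us @ t @ d"
    then show ?thesis by (auto simp: word_dvd_def)
  next
    assume x_us: "x = c @ us \<and> us @ y = t @ d"
    then obtain vs where "(us = t @ vs \<and> vs @ y = d) \<or> (us @ vs = t \<and> y = vs @ d)"
      by (auto simp: append_eq_append_conv2)
    then show ?thesis
    proof
      assume "us = t @ vs \<and> vs @ y = d"
      then show ?thesis using x_us by (auto simp: word_dvd_def)
    next
      assume t_split: "us @ vs = t \<and> y = vs @ d"
      consider "us = []" | "vs = []" | "us \<noteq> []" "vs \<noteq> []" by blast
      then show ?thesis
      proof cases
        case 1
        then show ?thesis using t_split unfolding word_dvd_def by (metis append_Nil)
      next
        case 2
        then show ?thesis using x_us t_split unfolding word_dvd_def by (metis append_Nil2)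
      next
        case 3
        have "x \<noteq> []" "last x = last us" using 3 x_us by auto
        moreover have "last us \<in> set t" "hd vs \<in> set t" "hd vs \<in> set y"
          using 3 t_split by (auto dest: last_in_set hd_in_set)
        ultimately have "snd (last x) = b'" "snd (hd vs) = b'" "snd (hd vs) = b"
          using t y unfolding pure_word_def by metis+
        then show ?thesis using x \<open>x \<noteq> []\<close> by simp
      qed
    qed
  qed
qed

lemma pure_poly_pmult:
  assumes "finite (supp r)" "finite (supp p)" "pure_poly b r" "pure_poly b p"
  shows "pure_poly b (pmult r p)"
  using assms unfolding pmult_eq_lincomb[OF assms(1,2)]
  by (intro pure_poly_lincomb pure_poly_pmonom) (auto simp: pure_poly_def)

lemma pure_poly_pmult_pmonom:
  "finite (supp r) \<Longrightarrow> pure_poly b r \<Longrightarrow> pure_word b u \<Longrightarrow> pure_poly b (pmult r (pmonom u))"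
  by (simp add: pmult_pmonom_right) (intro pure_poly_lincomb pure_poly_pmonom, simp add: pure_poly_def)

section \<open>Standard words and normal forms\<close>

locale analytic_generated = monomial_ordered lt + conjugation cj
  for lt :: "'v word \<Rightarrow> 'v word \<Rightarrow> bool" and cj :: "'a::field \<Rightarrow> 'a" +
  fixes S :: "('v word \<Rightarrow> 'a) set"
  assumes S_polys: "S \<subseteq> polys"
    and S_analytic: "p \<in> S \<Longrightarrow> analytic_poly p"
begin

abbreviation I :: "('v word \<Rightarrow> 'a) set" where
  "I \<equiv> star_ideal_generated cj S"

lemma star_ideal_I: "is_star_ideal cj I"
  using S_polys by (rule star_ideal_generated)

sublocale two_sided_ideal I
  using star_ideal_I by unfold_locales (simp add: is_star_ideal_def)

text \<open>Standardness only refers to the pure elements of \<open>I\<close>; \<open>lm_not_standard\<close> below shows that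
  these already account for the leading words of all elements of \<open>I\<close>.\<close>

definition standard :: "'v word \<Rightarrow> bool" where
  "standard w \<longleftrightarrow> (\<forall>p\<in>I. p \<noteq> pzero \<longrightarrow> (\<exists>b. pure_poly b p) \<longrightarrow> \<not> word_dvd (lm lt p) w)"

lemma standard_dvd: "word_dvd t s \<Longrightarrow> standard s \<Longrightarrow> standard t"
  unfolding standard_def using word_dvd_trans by blast

lemma pure_word_lm:
  "finite (supp p) \<Longrightarrow> p \<noteq> pzero \<Longrightarrow> pure_poly b p \<Longrightarrow> pure_word b (lm lt p)"
  using lm_in_supp by (auto simp: pure_poly_def)

lemma not_standard_pure_reducer:
  assumes s: "pure_word b s" and "\<not> standard s"
  obtains p where "p \<in> I" "p \<noteq> pzero" "pure_poly b p" "word_dvd (lm lt p) s"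
proof -
  obtain p b' where p: "p \<in> I" "p \<noteq> pzero" "pure_poly b' p" "word_dvd (lm lt p) s"
    using assms(2) unfolding standard_def by blast
  have fin: "finite (supp p)" using p(1) by (rule finite_supp_mem)
  have "pure_poly b p"
  proof (cases "lm lt p")
    case Nil
    then have "supp p \<subseteq> {[]}" using lt_lm[OF fin p(2)] not_lt_Nil by fastforce
    then show ?thesis by (auto simp: pure_poly_def pure_word_def)
  next
    case (Cons l _)
    have "pure_word b' (lm lt p)" "pure_word b (lm lt p)"
      using pure_word_lm[OF fin p(2,3)] pure_word_dvd[OF p(4) s] by auto
    then show ?thesis using Cons p(3) by (simp add: pure_word_def)
  qed
  then show ?thesis using that p by blast
qed

lemma reduction_step:
  assumes s: "pure_word b s" and "\<not> standard s"
  obtains q where "finite (supp q)" "psub (pmonom s) q \<in> I"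
    "\<And>z. z \<in> supp q \<Longrightarrow> pure_word b z \<and> lt z s"
proof -
  obtain p where p: "p \<in> I" "p \<noteq> pzero" "pure_poly b p" "word_dvd (lm lt p) s"
    using not_standard_pure_reducer[OF assms] .
  define t where "t = lm lt p"
  obtain c d where s_eq: "s = c @ t @ d" using p(4) by (auto simp: word_dvd_def t_def)
  have fin: "finite (supp p)" using p(1) by (rule finite_supp_mem)
  have t: "t \<in> supp p" and lt_t: "\<And>u. u \<in> supp p \<Longrightarrow> u \<noteq> t \<Longrightarrow> lt u t"
    using lm_in_supp[OF fin p(2)] lt_lm[OF fin p(2)] by (auto simp: t_def)
  define sh where "sh = lincomb p (\<lambda>u. pmonom (c @ u @ d))"
  define q where "q = psub (pmonom s) (pscale (inverse (p t)) sh)"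
  have sh: "sh \<in> I" unfolding sh_def using p(1) by (rule pmult_pmonom_pmonom_mem)
  have sh_s: "sh s = p t"
    using t fin by (simp add: sh_def lincomb_def pmonom_def s_eq if_distrib cong: if_cong)
  have supp_sh: "supp sh \<subseteq> (\<lambda>u. c @ u @ d) ` supp p"
    using supp_lincomb[of p "\<lambda>u. pmonom (c @ u @ d)"] by (auto simp: sh_def supp_pmonom)
  show ?thesis
  proof
    show "finite (supp q)"
      using finite_supp_mem[OF sh] by (simp add: q_def finite_supp_psub finite_supp_pscale)
    have "psub (pmonom s) q = pscale (inverse (p t)) sh"
      by (simp add: q_def psub_def pscale_def)
    then show "psub (pmonom s) q \<in> I" using pscale_mem[OF sh] by simp
  next
    fix z assume z: "z \<in> supp q"
    have "z \<noteq> s" using z t sh_s by (auto simp: q_def in_supp_iff psub_def pscale_def pmonom_def)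
    moreover have "z \<in> supp (pmonom s :: _ \<Rightarrow> 'a) \<union> supp (pscale (inverse (p t)) sh)"
      using z supp_psub unfolding q_def by blast
    ultimately have "z \<in> supp sh" using supp_pscale by (auto simp: supp_pmonom)
    then obtain u where u: "u \<in> supp p" "z = c @ u @ d" using supp_sh by blast
    then have "u \<noteq> t" using \<open>z \<noteq> s\<close> s_eq by blast
    then have "lt z s" using lt_append_both[OF lt_t[OF u(1)]] s_eq u(2) by simp
    moreover have "pure_word b z" using u p(3) s s_eq by (simp add: pure_poly_def)
    ultimately show "pure_word b z \<and> lt z s" by blast
  qed
qed

definition standard_poly :: "('v word \<Rightarrow> 'a) \<Rightarrow> bool" where
  "standard_poly v \<longleftrightarrow> finite (supp v) \<and> (\<forall>w\<in>supp v. standard w)"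

definition is_normal_form :: "bool \<Rightarrow> 'v word \<Rightarrow> ('v word \<Rightarrow> 'a) \<Rightarrow> bool" where
  "is_normal_form b s r \<longleftrightarrow> standard_poly r \<and> pure_poly b r \<and>
     (\<forall>z\<in>supp r. z = s \<or> lt z s) \<and> psub (pmonom s) r \<in> I"

lemma is_normal_form_lincomb:
  assumes q: "finite (supp q)" "psub (pmonom s) q \<in> I"
    and smaller: "\<And>z. z \<in> supp q \<Longrightarrow> lt z s"
    and R: "\<And>z. z \<in> supp q \<Longrightarrow> is_normal_form b z (R z)"
  shows "is_normal_form b s (lincomb q R)"
  unfolding is_normal_form_def
proof (intro conjI ballI)
  show "pure_poly b (lincomb q R)"
    using R by (intro pure_poly_lincomb) (auto simp: is_normal_form_def)
  have "standard y \<and> (y = s \<or> lt y s)" if y: "y \<in> supp (lincomb q R)" for y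
  proof -
    obtain z where z: "z \<in> supp q" "y \<in> supp (R z)" using y supp_lincomb[of q R] by blast
    then have "standard y \<and> (y = z \<or> lt y z)"
      using R by (auto simp: is_normal_form_def standard_poly_def)
    then show ?thesis using smaller[OF z(1)] lt_trans[of y z s] by auto
  qed
  moreover have "finite (supp (lincomb q R))"
    using R q(1) by (intro finite_supp_lincomb) (auto simp: is_normal_form_def standard_poly_def)
  ultimately show "standard_poly (lincomb q R)" "\<And>y. y \<in> supp (lincomb q R) \<Longrightarrow> y = s \<or> lt y s"
    by (auto simp: standard_poly_def)
next
  have "psub q (lincomb q R) = lincomb q (\<lambda>z. psub (pmonom z) (R z))"
    using lincomb_pmonom_right[OF q(1)] psub_lincomb[of q pmonom R] by simp
  also have "\<dots> \<in> I" using q(1) R by (intro lincomb_mem) (auto simp: is_normal_form_def)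
  finally have "padd (psub (pmonom s) q) (psub q (lincomb q R)) \<in> I"
    using q(2) by (rule padd_mem[rotated])
  then show "psub (pmonom s) (lincomb q R) \<in> I" by (simp add: padd_def psub_def)
qed

lemma normal_form_exists: "pure_word b s \<Longrightarrow> \<exists>r. is_normal_form b s r"
proof (induction s rule: wfp_induct_rule[OF wfp_lt])
  case (1 s)
  show ?case
  proof (cases "standard s")
    case True
    then have "is_normal_form b s (pmonom s)"
      using "1.prems" by (simp add: is_normal_form_def standard_poly_def supp_pmonom pure_poly_pmonom
          pzero_mem)
    then show ?thesis by blast
  next
    case False
    obtain q where q: "finite (supp q)" "psub (pmonom s) q \<in> I"
      and smaller: "\<And>z. z \<in> supp q \<Longrightarrow> pure_word b z \<and> lt z s"
      using reduction_step[OF "1.prems" False] by blast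
    define R where "R z = (SOME r. is_normal_form b z r)" for z
    have "is_normal_form b z (R z)" if "z \<in> supp q" for z
      unfolding R_def using "1.IH" smaller[OF that] by (metis someI_ex)
    then show ?thesis using is_normal_form_lincomb[OF q] smaller by blast
  qed
qed

definition nf_word :: "bool \<Rightarrow> 'v word \<Rightarrow> 'v word \<Rightarrow> 'a" where
  "nf_word b s = (SOME r. is_normal_form b s r)"

definition nf :: "bool \<Rightarrow> ('v word \<Rightarrow> 'a) \<Rightarrow> 'v word \<Rightarrow> 'a" where
  "nf b q = lincomb q (nf_word b)"

lemma nf_word: "pure_word b s \<Longrightarrow> is_normal_form b s (nf_word b s)"
  unfolding nf_word_def using normal_form_exists by (rule someI_ex)

lemma finite_supp_nf_word: "pure_word b s \<Longrightarrow> finite (supp (nf_word b s))"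
  using nf_word by (simp add: is_normal_form_def standard_poly_def)

lemma nf_pmonom: "nf b (pmonom s) = nf_word b s"
  by (simp add: nf_def lincomb_pmonom)

text \<open>A nonzero difference would be a pure element of \<open>I\<close> with a standard leading word.\<close>

lemma standard_poly_congruent_eq:
  assumes "standard_poly r1" "standard_poly r2" "pure_poly b r1" "pure_poly b r2"
    and "psub r1 r2 \<in> I"
  shows "r1 = r2"
proof (rule ccontr)
  let ?e = "psub r1 r2"
  assume "r1 \<noteq> r2"
  then have e: "?e \<noteq> pzero" by (auto simp: psub_def pzero_def fun_eq_iff)
  have "lm lt ?e \<in> supp r1 \<union> supp r2"
    using lm_in_supp[OF finite_supp_mem[OF assms(5)] e] supp_psub by blast
  then have "standard (lm lt ?e)" using assms(1,2) by (auto simp: standard_poly_def)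
  moreover have "pure_poly b ?e" using assms(3,4) by (rule pure_poly_psub)
  ultimately show False using assms(5) e by (auto simp: standard_def)
qed

lemma
  assumes "finite (supp q)" "pure_poly b q"
  shows standard_poly_nf: "standard_poly (nf b q)"
    and pure_poly_nf: "pure_poly b (nf b q)"
    and psub_nf_mem: "psub q (nf b q) \<in> I"
proof -
  have normal: "is_normal_form b u (nf_word b u)" if "u \<in> supp q" for u
    using nf_word assms(2) that by (auto simp: pure_poly_def)
  have "finite (supp (nf b q))" unfolding nf_def
    using normal assms(1) by (intro finite_supp_lincomb) (auto simp: is_normal_form_def standard_poly_def)
  moreover have "standard z" if "z \<in> supp (nf b q)" for z
    using that supp_lincomb[of q "nf_word b"] normal
    by (fastforce simp: nf_def is_normal_form_def standard_poly_def)
  ultimately show "standard_poly (nf b q)" by (simp add: standard_poly_def)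
  show "pure_poly b (nf b q)" unfolding nf_def
    using normal by (intro pure_poly_lincomb) (auto simp: is_normal_form_def)
  have "psub q (nf b q) = lincomb q (\<lambda>u. psub (pmonom u) (nf_word b u))"
    unfolding nf_def using lincomb_pmonom_right[OF assms(1)] psub_lincomb[of q pmonom] by simp
  also have "\<dots> \<in> I" using assms(1) normal by (intro lincomb_mem) (auto simp: is_normal_form_def)
  finally show "psub q (nf b q) \<in> I" .
qed

lemma nf_eqI:
  assumes q: "finite (supp q)" "pure_poly b q"
    and r: "standard_poly r" "pure_poly b r" "psub q r \<in> I"
  shows "nf b q = r"
proof (rule standard_poly_congruent_eq)
  have "psub (nf b q) r = psub (psub q r) (psub q (nf b q))"
    by (simp add: psub_def)
  then show "psub (nf b q) r \<in> I" using psub_mem[OF r(3) psub_nf_mem[OF q]] by simp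
qed (use q r standard_poly_nf pure_poly_nf in auto)

lemma nf_standard_poly: "standard_poly r \<Longrightarrow> pure_poly b r \<Longrightarrow> nf b r = r"
  by (rule nf_eqI) (auto simp: standard_poly_def pzero_mem)

lemma nf_word_standard: "pure_word b s \<Longrightarrow> standard s \<Longrightarrow> nf_word b s = pmonom s"
  using nf_standard_poly[of "pmonom s" b]
  by (simp add: nf_pmonom standard_poly_def supp_pmonom pure_poly_pmonom)

lemma nf_mem: "q \<in> I \<Longrightarrow> pure_poly b q \<Longrightarrow> nf b q = pzero"
  by (rule nf_eqI) (auto simp: finite_supp_mem standard_poly_def)

lemma nf_lincomb:
  assumes "finite (supp f)" "\<And>u. u \<in> supp f \<Longrightarrow> finite (supp (\<Psi> u))"
  shows "nf b (lincomb f \<Psi>) = lincomb f (\<lambda>u. nf b (\<Psi> u))"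
  unfolding nf_def using assms by (rule lincomb_lincomb)

lemma nf_congruent:
  assumes "finite (supp q1)" "pure_poly b q1" "finite (supp q2)" "pure_poly b q2"
    and "psub q1 q2 \<in> I"
  shows "nf b q1 = nf b q2"
proof (rule nf_eqI)
  have "psub q1 (nf b q2) = padd (psub q1 q2) (psub q2 (nf b q2))"
    by (simp add: psub_def padd_def)
  then show "psub q1 (nf b q2) \<in> I" using padd_mem[OF assms(5) psub_nf_mem[OF assms(3,4)]] by simp
qed (use assms standard_poly_nf pure_poly_nf in auto)

lemma nf_pmult_nf:
  assumes "finite (supp q)" "pure_poly b q" "pure_word b u"
  shows "nf b (pmult (nf b q) (pmonom u)) = nf b (pmult q (pmonom u))"
proof (rule nf_congruent[symmetric])
  have nf: "finite (supp (nf b q))" "pure_poly b (nf b q)"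
    using standard_poly_nf[OF assms(1,2)] pure_poly_nf[OF assms(1,2)] by (auto simp: standard_poly_def)
  then show "finite (supp (pmult (nf b q) (pmonom u)))" "pure_poly b (pmult (nf b q) (pmonom u))"
    using assms(3) by (auto simp: finite_supp_pmult pure_poly_pmult_pmonom)
  show "finite (supp (pmult q (pmonom u)))" "pure_poly b (pmult q (pmonom u))"
    using assms by (auto simp: finite_supp_pmult pure_poly_pmult_pmonom)
  show "psub (pmult q (pmonom u)) (pmult (nf b q) (pmonom u)) \<in> I"
    using pmult_pmonom_right_mem[OF psub_nf_mem[OF assms(1,2)]] by (simp add: pmult_psub_left)
qed

section \<open>The action of the free algebra on standard polynomials\<close>

text \<open>A right action of the free algebra on polynomials, modelling multiplication in the quotient
  by \<open>I\<close>. A letter with flag \<open>b\<close> acts on a word \<open>w\<close> by replacing the \<open>b\<close>-pure tail of \<open>w\<close>,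
  extended by that letter, by its normal form; the rest of \<open>w\<close> is kept, since by
  \<open>word_dvd_append_pure\<close> no pure leading word can overlap both parts.\<close>

definition prepend :: "'v word \<Rightarrow> ('v word \<Rightarrow> 'a) \<Rightarrow> 'v word \<Rightarrow> 'a" where
  "prepend x r = lincomb r (\<lambda>u. pmonom (x @ u))"

definition act_monom :: "'v word \<Rightarrow> 'v \<times> bool \<Rightarrow> 'v word \<Rightarrow> 'a" where
  "act_monom w l = prepend (strip_pure_suffix (snd l) w) (nf_word (snd l) (pure_suffix (snd l) w @ [l]))"

definition act_letter :: "('v word \<Rightarrow> 'a) \<Rightarrow> 'v \<times> bool \<Rightarrow> 'v word \<Rightarrow> 'a" where
  "act_letter v l = lincomb v (\<lambda>w. act_monom w l)"

definition act_word :: "('v word \<Rightarrow> 'a) \<Rightarrow> 'v word \<Rightarrow> 'v word \<Rightarrow> 'a" where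
  "act_word v u = foldl act_letter v u"

definition act :: "('v word \<Rightarrow> 'a) \<Rightarrow> ('v word \<Rightarrow> 'a) \<Rightarrow> 'v word \<Rightarrow> 'a" where
  "act v f = lincomb f (act_word v)"

lemma act_word_Nil [simp]: "act_word v [] = v"
  by (simp add: act_word_def)

lemma act_word_snoc [simp]: "act_word v (u @ [l]) = act_letter (act_word v u) l"
  by (simp add: act_word_def)

lemma act_word_act_word: "act_word (act_word v u) w = act_word v (u @ w)"
  by (simp add: act_word_def)

lemma finite_supp_prepend: "finite (supp r) \<Longrightarrow> finite (supp (prepend x r))"
  unfolding prepend_def by (intro finite_supp_lincomb) auto

lemma finite_supp_act_monom: "finite (supp (act_monom w l))"
  unfolding act_monom_def using pure_word_pure_suffix[of "snd l" w]
  by (intro finite_supp_prepend finite_supp_nf_word) (simp add: pure_word_def)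

lemma finite_supp_act_word: "finite (supp v) \<Longrightarrow> finite (supp (act_word v u))"
  by (induction u rule: rev_induct)
    (simp_all add: act_letter_def finite_supp_lincomb finite_supp_act_monom)

lemma finite_supp_act: "finite (supp f) \<Longrightarrow> finite (supp v) \<Longrightarrow> finite (supp (act v f))"
  unfolding act_def by (intro finite_supp_lincomb finite_supp_act_word)

lemma act_word_lincomb:
  assumes "finite (supp g)" "\<And>z. z \<in> supp g \<Longrightarrow> finite (supp (\<Psi> z))"
  shows "act_word (lincomb g \<Psi>) u = lincomb g (\<lambda>z. act_word (\<Psi> z) u)"
proof (induction u rule: rev_induct)
  case (snoc l u)
  have "act_word (lincomb g \<Psi>) (u @ [l]) =
      lincomb (lincomb g (\<lambda>z. act_word (\<Psi> z) u)) (\<lambda>w. act_monom w l)"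
    by (simp add: snoc act_letter_def)
  also have "\<dots> = lincomb g (\<lambda>z. act_letter (act_word (\<Psi> z) u) l)"
    unfolding act_letter_def using assms by (intro lincomb_lincomb finite_supp_act_word)
  finally show ?case by simp
qed simp

lemma act_lincomb:
  assumes "finite (supp g)" "\<And>z. z \<in> supp g \<Longrightarrow> finite (supp (\<Psi> z))"
  shows "act (lincomb g \<Psi>) f = lincomb g (\<lambda>z. act (\<Psi> z) f)"
proof -
  have "act_word (lincomb g \<Psi>) = (\<lambda>u. lincomb g (\<lambda>z. act_word (\<Psi> z) u))"
    using act_word_lincomb[OF assms] by (rule ext)
  then show ?thesis unfolding act_def by (simp add: lincomb_swap[of f g])
qed

lemma act_pmult:
  assumes "finite (supp v)" "finite (supp f)" "finite (supp g)"
  shows "act v (pmult f g) = act (act v f) g"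
proof -
  have "act v (pmult f g) = lincomb (lincomb f (\<lambda>u. lincomb g (\<lambda>w. pmonom (u @ w)))) (act_word v)"
    by (simp add: act_def pmult_eq_lincomb assms(2,3))
  also have "\<dots> = lincomb f (\<lambda>u. lincomb (lincomb g (\<lambda>w. pmonom (u @ w))) (act_word v))"
    using assms by (intro lincomb_lincomb finite_supp_lincomb) auto
  also have "\<dots> = lincomb f (\<lambda>u. lincomb g (\<lambda>w. act_word v (u @ w)))"
    using assms by (intro lincomb_cong) (simp add: lincomb_lincomb lincomb_pmonom)
  also have "\<dots> = lincomb g (\<lambda>w. lincomb f (\<lambda>u. act_word (act_word v u) w))"
    by (simp add: lincomb_swap[of f g] act_word_act_word)
  also have "\<dots> = act (act v f) g"
    unfolding act_def using assms by (intro lincomb_cong) (simp add: act_word_lincomb finite_supp_act_word)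
  finally show ?thesis .
qed

lemma act_padd:
  "finite (supp f) \<Longrightarrow> finite (supp g) \<Longrightarrow> act v (padd f g) = padd (act v f) (act v g)"
  by (simp add: act_def lincomb_padd)

lemma act_pzero_left [simp]: "act pzero f = pzero"
proof -
  have "act_word pzero u = pzero" for u
    by (induction u rule: rev_induct) (simp_all add: act_letter_def)
  then show ?thesis by (simp add: act_def lincomb_def pzero_def)
qed

lemma act_pzero_right [simp]: "act v pzero = pzero"
  by (simp add: act_def)

lemma prepend_pzero [simp]: "prepend x pzero = pzero"
  by (simp add: prepend_def)

lemma prepend_pmonom: "prepend x (pmonom s) = pmonom (x @ s)"
  by (simp add: prepend_def lincomb_pmonom)

lemma prepend_lincomb:
  assumes "finite (supp f)" "\<And>u. u \<in> supp f \<Longrightarrow> finite (supp (\<Psi> u))"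
  shows "prepend x (lincomb f \<Psi>) = lincomb f (\<lambda>u. prepend x (\<Psi> u))"
  unfolding prepend_def using assms by (rule lincomb_lincomb)

lemma act_monom_append:
  assumes "ends_impure (snd l) x" "pure_word (snd l) u"
  shows "act_monom (x @ u) l = prepend x (nf_word (snd l) (u @ [l]))"
  by (simp add: act_monom_def pure_suffix_append[OF assms] strip_pure_suffix_append[OF assms])

lemma act_letter_prepend:
  assumes x: "ends_impure b x" and r: "finite (supp r)" "pure_poly b r" and l: "snd l = b"
  shows "act_letter (prepend x r) l = prepend x (nf b (pmult r (pmonom [l])))"
proof -
  have pure: "pure_word b u" if "u \<in> supp r" for u using r(2) that by (simp add: pure_poly_def)
  have "act_letter (prepend x r) l = lincomb r (\<lambda>u. act_monom (x @ u) l)"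
    unfolding act_letter_def prepend_def using r(1) by (simp add: lincomb_lincomb lincomb_pmonom)
  also have "\<dots> = lincomb r (\<lambda>u. prepend x (nf_word b (u @ [l])))"
    using act_monom_append x l pure by (intro lincomb_cong) auto
  also have "\<dots> = prepend x (lincomb r (\<lambda>u. nf_word b (u @ [l])))"
    using r(1) pure l by (intro prepend_lincomb[symmetric] finite_supp_nf_word) (auto simp: pure_word_def)
  also have "lincomb r (\<lambda>u. nf_word b (u @ [l])) = nf b (pmult r (pmonom [l]))"
    using r(1) by (simp add: pmult_pmonom_right nf_lincomb nf_pmonom)
  finally show ?thesis .
qed

lemma act_word_prepend:
  assumes x: "ends_impure b x" and r: "standard_poly r" "pure_poly b r"
  shows "pure_word b u \<Longrightarrow> act_word (prepend x r) u = prepend x (nf b (pmult r (pmonom u)))"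
proof (induction u rule: rev_induct)
  case Nil
  have "pmult r (pmonom []) = r"
    using r(1) by (simp add: pmult_pmonom_right lincomb_pmonom_right standard_poly_def)
  then show ?case using nf_standard_poly[OF r] by simp
next
  case (snoc l u)
  then have u: "pure_word b u" and l: "snd l = b" by (auto simp: pure_word_def)
  have r_fin: "finite (supp r)" using r(1) by (simp add: standard_poly_def)
  let ?q = "nf b (pmult r (pmonom u))"
  have ru: "finite (supp (pmult r (pmonom u)))" "pure_poly b (pmult r (pmonom u))"
    using r_fin r(2) u by (auto simp: finite_supp_pmult pure_poly_pmult_pmonom)
  have q: "finite (supp ?q)" "pure_poly b ?q"
    using standard_poly_nf[OF ru] pure_poly_nf[OF ru] by (auto simp: standard_poly_def)
  have "act_word (prepend x r) (u @ [l]) = act_letter (prepend x ?q) l"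
    using snoc.IH[OF u] by simp
  also have "\<dots> = prepend x (nf b (pmult ?q (pmonom [l])))"
    using act_letter_prepend[OF x q l] .
  also have "nf b (pmult ?q (pmonom [l])) = nf b (pmult r (pmonom (u @ [l])))"
    using nf_pmult_nf[OF ru, of "[l]"] l r_fin by (simp add: pure_word_def pmult_pmonom_pmonom)
  finally show ?case .
qed

lemma act_prepend:
  assumes x: "ends_impure b x" and r: "standard_poly r" "pure_poly b r"
    and p: "finite (supp p)" "pure_poly b p"
  shows "act (prepend x r) p = prepend x (nf b (pmult r p))"
proof -
  have r_fin: "finite (supp r)" using r(1) by (simp add: standard_poly_def)
  have pure: "pure_word b u" if "u \<in> supp p" for u using p(2) that by (simp add: pure_poly_def)
  have fin: "finite (supp (nf b (pmult r (pmonom u))))" if "u \<in> supp p" for u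
    using standard_poly_nf[OF _ pure_poly_pmult_pmonom] r_fin r(2) pure[OF that]
    by (simp add: standard_poly_def finite_supp_pmult)
  have "act (prepend x r) p = lincomb p (\<lambda>u. prepend x (nf b (pmult r (pmonom u))))"
    unfolding act_def using act_word_prepend[OF x r] pure by (intro lincomb_cong) auto
  also have "\<dots> = prepend x (lincomb p (\<lambda>u. nf b (pmult r (pmonom u))))"
    using p(1) fin by (rule prepend_lincomb[symmetric])
  also have "lincomb p (\<lambda>u. nf b (pmult r (pmonom u))) = nf b (pmult r p)"
    using p(1) r_fin
    by (simp add: nf_lincomb[symmetric] finite_supp_pmult pmult_eq_lincomb_pmult_pmonom[symmetric])
  finally show ?thesis .
qed

text \<open>Cut a standard word into its impure head and pure tail; the action then multiplies the tail
  with an element of \<open>I\<close> and normalises.\<close>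

lemma act_pure_mem:
  assumes v: "standard_poly v" and p: "p \<in> I" "pure_poly b p"
  shows "act v p = pzero"
proof -
  have p_fin: "finite (supp p)" using p(1) by (rule finite_supp_mem)
  have "act (pmonom w) p = pzero" if "standard w" for w
  proof -
    define x s where "x = strip_pure_suffix b w" and "s = pure_suffix b w"
    have s: "pure_word b s" "standard s"
      using pure_word_pure_suffix standard_dvd[OF word_dvd_pure_suffix that] by (auto simp: s_def)
    have r: "standard_poly (pmonom s)" "pure_poly b (pmonom s :: _ \<Rightarrow> 'a)"
      using s by (auto simp: standard_poly_def supp_pmonom pure_poly_pmonom)
    have "pmult (pmonom s) p \<in> I"
      using pmult_pmonom_pmonom_mem[OF p(1), of s "[]"] p_fin by (simp add: pmult_pmonom_left)
    moreover have "pure_poly b (pmult (pmonom s) p)"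
      using r(2) p(2) p_fin by (intro pure_poly_pmult) auto
    ultimately have "act (prepend x (pmonom s)) p = pzero"
      using act_prepend[OF ends_impure_strip_pure_suffix[of b w, folded x_def] r p_fin p(2)]
      by (simp add: nf_mem)
    then show ?thesis by (simp add: prepend_pmonom x_def s_def)
  qed
  moreover have "act v p = lincomb v (\<lambda>w. act (pmonom w) p)"
    using v lincomb_pmonom_right[of v] act_lincomb[of v pmonom]
    by (simp add: standard_poly_def)
  ultimately show ?thesis using v by (simp add: lincomb_eq_pzero standard_poly_def)
qed

lemma standard_append:
  assumes "standard x" "standard y" "pure_word b y" "ends_impure b x"
  shows "standard (x @ y)"
  unfolding standard_def
proof (intro ballI impI notI)
  fix p assume p: "p \<in> I" "p \<noteq> pzero" "\<exists>b. pure_poly b p" and dvd: "word_dvd (lm lt p) (x @ y)"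
  obtain b' where "pure_poly b' p" using p(3) by blast
  then have "pure_word b' (lm lt p)" using pure_word_lm finite_supp_mem p(1,2) by blast
  moreover obtain c d where "x @ y = c @ lm lt p @ d" using dvd by (auto simp: word_dvd_def)
  ultimately have "word_dvd (lm lt p) x \<or> word_dvd (lm lt p) y"
    using word_dvd_append_pure assms(3,4) by blast
  then show False using assms(1,2) p unfolding standard_def by blast
qed

lemma standard_supp_act_monom: "standard w \<Longrightarrow> z \<in> supp (act_monom w l) \<Longrightarrow> standard z"
proof -
  assume w: "standard w" and z: "z \<in> supp (act_monom w l)"
  define b where "b = snd l"
  have "pure_word b (pure_suffix b w @ [l])"
    using pure_word_pure_suffix[of b w] by (simp add: pure_word_def b_def)
  then have nf: "is_normal_form b (pure_suffix b w @ [l]) (nf_word b (pure_suffix b w @ [l]))"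
    by (rule nf_word)
  obtain u where u: "u \<in> supp (nf_word b (pure_suffix b w @ [l]))" "z = strip_pure_suffix b w @ u"
    using z supp_lincomb unfolding act_monom_def prepend_def b_def[symmetric]
    by (fastforce simp: supp_pmonom)
  have "standard u" "pure_word b u"
    using nf u(1) by (auto simp: is_normal_form_def standard_poly_def pure_poly_def)
  moreover have "standard (strip_pure_suffix b w)"
    using standard_dvd[OF word_dvd_strip_pure_suffix w] .
  ultimately show "standard z" using standard_append ends_impure_strip_pure_suffix u(2) by blast
qed

lemma standard_poly_act_word: "standard_poly v \<Longrightarrow> standard_poly (act_word v u)"
proof (induction u rule: rev_induct)
  case (snoc l u)
  then have IH: "standard_poly (act_word v u)" by blast
  have "standard z" if z: "z \<in> supp (act_word v (u @ [l]))" for z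
  proof -
    obtain w where w: "w \<in> supp (act_word v u)" "z \<in> supp (act_monom w l)"
      using z supp_lincomb[of "act_word v u" "\<lambda>w. act_monom w l"] by (auto simp: act_letter_def)
    then show ?thesis using IH standard_supp_act_monom[of w z l] by (simp add: standard_poly_def)
  qed
  then show ?case
    using finite_supp_act_word[of v "u @ [l]"] snoc.prems by (simp add: standard_poly_def)
qed simp

lemma standard_poly_act: "standard_poly v \<Longrightarrow> finite (supp f) \<Longrightarrow> standard_poly (act v f)"
  using supp_lincomb[of f "act_word v"] standard_poly_act_word
  by (fastforce simp: standard_poly_def act_def finite_supp_act_word finite_supp_lincomb)

section \<open>Leading words of the ideal\<close>

text \<open>Requiring adjoints to act trivially as well makes this a *-ideal, so it contains \<open>I\<close> as soon
  as it contains \<open>S\<close>.\<close>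

definition annihilator :: "('v word \<Rightarrow> 'a) set" where
  "annihilator = {f \<in> polys. \<forall>v. standard_poly v \<longrightarrow> act v f = pzero \<and> act v (pstar cj f) = pzero}"

lemma act_pmult_annihilates:
  fixes a c :: "'v word \<Rightarrow> 'a"
  assumes f: "finite (supp f)" "\<And>v. standard_poly v \<Longrightarrow> act v f = pzero"
    and "finite (supp a)" "finite (supp c)" "standard_poly v"
  shows "act v (pmult (pmult a f) c) = pzero" "act v (pmult a (pmult f c)) = pzero"
proof -
  have fin: "finite (supp v)" "finite (supp (act v a))"
    using assms by (auto simp: standard_poly_def finite_supp_act)
  have "act (act v a) f = pzero" using f(2) standard_poly_act assms(3,5) by blast
  then show "act v (pmult (pmult a f) c) = pzero" "act v (pmult a (pmult f c)) = pzero"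
    using assms fin by (simp_all add: act_pmult finite_supp_pmult)
qed

lemma annihilator_star_ideal: "is_star_ideal cj annihilator"
  unfolding is_star_ideal_def is_ideal_def
proof (intro conjI ballI subsetI)
  fix p q :: "'v word \<Rightarrow> 'a" assume p: "p \<in> annihilator" and q: "q \<in> annihilator"
  then show "padd p q \<in> annihilator"
    by (auto simp: annihilator_def polys_def finite_supp_padd act_padd pstar_padd pstar_polys
        supp_pstar) (simp_all add: padd_def pzero_def)
next
  fix p a c :: "'v word \<Rightarrow> 'a" assume p: "p \<in> annihilator" and a: "a \<in> polys" and c: "c \<in> polys"
  have star: "pstar cj (pmult (pmult a p) c) = pmult (pstar cj c) (pmult (pstar cj p) (pstar cj a))"
    by (simp add: pstar_pmult)
  have fin: "finite (supp p)" "finite (supp (pstar cj p))" "finite (supp a)" "finite (supp c)"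
    "finite (supp (pstar cj a))" "finite (supp (pstar cj c))"
    using p a c pstar_polys by (auto simp: annihilator_def polys_def)
  have kill: "act v p = pzero" "act v (pstar cj p) = pzero" if "standard_poly v" for v
    using p that by (auto simp: annihilator_def)
  show "pmult (pmult a p) c \<in> annihilator"
    unfolding annihilator_def
    using fin act_pmult_annihilates(1)[OF fin(1) kill(1) fin(3,4)]
      act_pmult_annihilates(2)[OF fin(2) kill(2) fin(6,5)]
    by (simp add: polys_def finite_supp_pmult star)
next
  fix x assume "x \<in> pstar cj ` annihilator"
  then show "x \<in> annihilator" using pstar_polys by (auto simp: annihilator_def)
qed (auto simp: annihilator_def polys_def)

lemma I_subset_annihilator: "I \<subseteq> annihilator"
proof (rule star_ideal_generated_least[OF annihilator_star_ideal], rule subsetI)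
  fix p assume p: "p \<in> S"
  have mem: "p \<in> I" "pstar cj p \<in> I"
    using p subset_star_ideal_generated star_ideal_I by (auto simp: is_star_ideal_def)
  have "pure_poly False p" "pure_poly True (pstar cj p)"
    using S_analytic[OF p] pure_poly_pstar[of False p] by (auto simp: analytic_poly_iff_pure_poly)
  then show "p \<in> annihilator"
    using p S_polys mem act_pure_mem by (auto simp: annihilator_def)
qed

lemma act_word_one_standard: "standard w \<Longrightarrow> act_word (pmonom []) w = pmonom w"
proof (induction w rule: rev_induct)
  case (snoc l w)
  define b where "b = snd l"
  have "word_dvd w (w @ [l])" "word_dvd (pure_suffix b w @ [l]) (w @ [l])"
    unfolding word_dvd_def
    by (rule exI[of _ "[]"], rule exI[of _ "[l]"], simp)
      (rule exI[of _ "strip_pure_suffix b w"], rule exI[of _ "[]"], simp)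
  then have "standard w" "standard (pure_suffix b w @ [l])"
    using standard_dvd snoc.prems by blast+
  moreover have "pure_word b (pure_suffix b w @ [l])"
    using pure_word_pure_suffix[of b w] by (simp add: pure_word_def b_def)
  ultimately have "act_word (pmonom []) (w @ [l]) =
      pmonom (strip_pure_suffix b w @ pure_suffix b w @ [l])"
    using snoc.IH by (simp add: act_letter_def lincomb_pmonom act_monom_def b_def[symmetric]
        nf_word_standard prepend_pmonom)
  then show ?case by (simp flip: append_assoc)
qed simp

lemma supp_act_word_one: "z \<in> supp (act_word (pmonom []) w) \<Longrightarrow> z = w \<or> lt z w"
proof (induction w arbitrary: z rule: rev_induct)
  case Nil
  then show ?case by (simp add: supp_pmonom)
next
  case (snoc l w)
  define b where "b = snd l"
  obtain x where x: "x \<in> supp (act_word (pmonom []) w)" "z \<in> supp (act_monom x l)"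
    using snoc.prems supp_lincomb[of "act_word (pmonom []) w" "\<lambda>w. act_monom w l"]
    by (auto simp: act_letter_def)
  have "pure_word b (pure_suffix b x @ [l])"
    using pure_word_pure_suffix[of b x] by (simp add: pure_word_def b_def)
  then have nf: "is_normal_form b (pure_suffix b x @ [l]) (nf_word b (pure_suffix b x @ [l]))"
    by (rule nf_word)
  obtain u where u: "u \<in> supp (nf_word b (pure_suffix b x @ [l]))" "z = strip_pure_suffix b x @ u"
    using x(2) supp_lincomb unfolding act_monom_def prepend_def b_def[symmetric]
    by (fastforce simp: supp_pmonom)
  have "u = pure_suffix b x @ [l] \<or> lt u (pure_suffix b x @ [l])"
    using nf u(1) by (auto simp: is_normal_form_def)
  then have "z = x @ [l] \<or> lt z (x @ [l])"
    using lt_append_left[of u _ "strip_pure_suffix b x"] u(2)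
    by (metis append_assoc strip_pure_suffix_append_pure_suffix)
  moreover have "x @ [l] = w @ [l] \<or> lt (x @ [l]) (w @ [l])"
    using snoc.IH[OF x(1)] lt_append_right by blast
  ultimately show ?case using lt_trans[of z "x @ [l]" "w @ [l]"] by auto
qed

text \<open>Acting with \<open>f \<in> I\<close> on the empty word yields zero, but a standard leading word \<open>t\<close> of \<open>f\<close>
  would survive with coefficient \<open>f t\<close>, all other words of \<open>f\<close> only producing smaller words.\<close>

lemma lm_not_standard:
  assumes f: "f \<in> I" "f \<noteq> pzero"
  shows "\<not> standard (lm lt f)"
proof
  define t where "t = lm lt f"
  assume "standard (lm lt f)"
  then have t_std: "standard t" by (simp add: t_def)
  have fin: "finite (supp f)" using f(1) by (rule finite_supp_mem)
  have t: "t \<in> supp f" and lt_t: "\<And>u. u \<in> supp f \<Longrightarrow> u \<noteq> t \<Longrightarrow> lt u t"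
    using lm_in_supp[OF fin f(2)] lt_lm[OF fin f(2)] by (auto simp: t_def)
  have "standard_poly (pmonom [] :: _ \<Rightarrow> 'a)"
    using standard_dvd[OF word_dvd_Nil t_std] by (simp add: standard_poly_def supp_pmonom)
  then have "act (pmonom []) f = pzero" using I_subset_annihilator f(1) by (auto simp: annihilator_def)
  then have "0 = (\<Sum>u\<in>supp f. f u * act_word (pmonom []) u t)"
    by (simp add: act_def lincomb_def pzero_def fun_eq_iff)
  also have "\<dots> = f t * act_word (pmonom []) t t + (\<Sum>u\<in>supp f - {t}. f u * act_word (pmonom []) u t)"
    using fin t by (rule sum.remove)
  also have "(\<Sum>u\<in>supp f - {t}. f u * act_word (pmonom []) u t) = 0"
  proof (rule sum.neutral, rule ballI)
    fix u assume u: "u \<in> supp f - {t}"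
    have "t \<notin> supp (act_word (pmonom []) u)"
      using supp_act_word_one[of t u] lt_t[of u] u lt_asym by auto
    then show "f u * act_word (pmonom []) u t = 0" by (simp add: in_supp_iff)
  qed
  also have "act_word (pmonom []) t t = 1" using act_word_one_standard[OF t_std] by (simp add: pmonom_def)
  finally show False using t by (simp add: in_supp_iff)
qed

section \<open>The reduced Groebner basis\<close>

context
  fixes GB :: "('v word \<Rightarrow> 'a) set"
  assumes GB: "reduced_groebner_basis lt I GB"
begin

lemma groebner_covers: "f \<in> I \<Longrightarrow> f \<noteq> pzero \<Longrightarrow> \<exists>g\<in>GB. word_dvd (lm lt g) (lm lt f)"
  using GB by (simp add: reduced_groebner_basis_def)

lemma groebner_reduced:
  "g1 \<in> GB \<Longrightarrow> g2 \<in> GB \<Longrightarrow> g1 \<noteq> g2 \<Longrightarrow> w \<in> supp g2 \<Longrightarrow> \<not> word_dvd (lm lt g1) w"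
  using GB by (simp add: reduced_groebner_basis_def)

lemma
  assumes "g \<in> GB"
  shows groebner_mem: "g \<in> I" and groebner_nonzero: "g \<noteq> pzero"
    and groebner_lm_coeff: "g (lm lt g) = 1"
  using GB assms by (auto simp: reduced_groebner_basis_def monic_def)

lemma groebner_lower_word_irreducible:
  assumes g: "g \<in> GB" and w: "w \<in> supp g" "w \<noteq> lm lt g" and f: "f \<in> I" "f \<noteq> pzero"
  shows "\<not> word_dvd (lm lt f) w"
proof
  assume dvd: "word_dvd (lm lt f) w"
  obtain g' where g': "g' \<in> GB" "word_dvd (lm lt g') (lm lt f)" using groebner_covers[OF f] by blast
  have dvd': "word_dvd (lm lt g') w" using word_dvd_trans[OF g'(2) dvd] .
  show False
  proof (cases "g' = g")
    case True
    have "lt w (lm lt g)"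
      using lt_lm[OF finite_supp_mem[OF groebner_mem[OF g]] groebner_nonzero[OF g] w] .
    moreover have "lm lt g = w \<or> lt (lm lt g) w" using word_dvd_imp_le dvd' True by blast
    ultimately show False using w(2) lt_asym by blast
  qed (use groebner_reduced[OF g'(1) g _ w(1)] dvd' in blast)
qed

text \<open>The leading word of \<open>g\<close> is divisible by the leading word of a pure element of \<open>I\<close>, which in
  turn is divisible by the leading word of an element of the basis; reducedness forces all three
  to coincide.\<close>

lemma groebner_lm_pure:
  assumes g: "g \<in> GB"
  obtains b where "pure_word b (lm lt g)" "\<not> standard (lm lt g)"
proof -
  have ns: "\<not> standard (lm lt g)" using lm_not_standard groebner_mem groebner_nonzero g by blast
  then obtain p b where p: "p \<in> I" "p \<noteq> pzero" "pure_poly b p" "word_dvd (lm lt p) (lm lt g)"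
    unfolding standard_def by blast
  obtain g' where g': "g' \<in> GB" "word_dvd (lm lt g') (lm lt p)" using groebner_covers[OF p(1,2)] by blast
  have g_fin: "finite (supp g)" using finite_supp_mem[OF groebner_mem[OF g]] .
  have "g' = g"
    using groebner_reduced[OF g'(1) g _ lm_in_supp[OF g_fin groebner_nonzero[OF g]]]
      word_dvd_trans[OF g'(2) p(4)] by blast
  then have "lm lt p = lm lt g" using g'(2) p(4) word_dvd_antisym by blast
  then have "pure_word b (lm lt g)" using pure_word_lm[OF finite_supp_mem[OF p(1)] p(2,3)] by simp
  then show ?thesis using that ns by blast
qed

lemma groebner_eq_pmonom_minus_nf:
  assumes g: "g \<in> GB" and pure: "pure_word b (lm lt g)" and ns: "\<not> standard (lm lt g)"
  shows "g = psub (pmonom (lm lt g)) (nf_word b (lm lt g))"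
proof -
  define t h where "t = lm lt g" and "h = nf_word b t"
  have h: "standard_poly h" "psub (pmonom t) h \<in> I"
    using nf_word[OF pure] by (auto simp: is_normal_form_def h_def t_def)
  have "h t = 0" using h(1) ns by (auto simp: standard_poly_def in_supp_iff t_def)
  define e where "e = psub g (psub (pmonom t) h)"
  have e: "e \<in> I" unfolding e_def using groebner_mem[OF g] h(2) by (rule psub_mem)
  have "e = pzero"
  proof (rule ccontr)
    assume e0: "e \<noteq> pzero"
    define m where "m = lm lt e"
    have "m \<in> supp e" using lm_in_supp[OF finite_supp_mem[OF e] e0] by (simp add: m_def)
    moreover have "m \<noteq> t"
      using calculation groebner_lm_coeff[OF g] \<open>h t = 0\<close>
      by (auto simp: e_def psub_def in_supp_iff pmonom_def t_def)
    ultimately have "m \<in> supp g \<or> m \<in> supp h"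
      by (auto simp: e_def psub_def pmonom_def in_supp_iff)
    then show False
    proof
      assume "m \<in> supp g"
      then have "\<not> word_dvd (lm lt e) m"
        using groebner_lower_word_irreducible[OF g _ _ e e0] \<open>m \<noteq> t\<close> by (simp add: t_def)
      then show False by (simp add: m_def)
    next
      assume "m \<in> supp h"
      then show False using h(1) lm_not_standard[OF e e0] by (simp add: standard_poly_def m_def)
    qed
  qed
  then show ?thesis by (simp add: e_def psub_def pzero_def fun_eq_iff t_def h_def)
qed

lemma groebner_pure: "g \<in> GB \<Longrightarrow> \<exists>b. pure_poly b g"
proof -
  assume g: "g \<in> GB"
  obtain b where b: "pure_word b (lm lt g)" "\<not> standard (lm lt g)"
    using groebner_lm_pure[OF g] .
  have "pure_poly b (psub (pmonom (lm lt g)) (nf_word b (lm lt g)))"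
    using nf_word[OF b(1)] pure_poly_pmonom[OF b(1)]
    by (intro pure_poly_psub) (auto simp: is_normal_form_def)
  then show ?thesis using groebner_eq_pmonom_minus_nf[OF g b] by auto
qed

lemma groebner_analytic_split:
  "\<exists>G H. G \<subseteq> polys \<and> H \<subseteq> polys \<and> (\<forall>p\<in>G \<union> H. analytic_poly p) \<and> GB = G \<union> pstar cj ` H"
proof (intro exI conjI)
  let ?G = "{g \<in> GB. pure_poly False g}" and ?H = "pstar cj ` {g \<in> GB. pure_poly True g}"
  have GB_polys: "GB \<subseteq> polys" using groebner_mem finite_supp_mem by (auto simp: polys_def)
  then show "?G \<subseteq> polys" "?H \<subseteq> polys" using pstar_polys by auto
  show "\<forall>p\<in>?G \<union> ?H. analytic_poly p"
    using pure_poly_pstar[of True] by (auto simp: analytic_poly_iff_pure_poly)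
  have "GB \<subseteq> ?G \<union> {g \<in> GB. pure_poly True g}"
  proof
    fix g assume g: "g \<in> GB"
    then obtain b where "pure_poly b g" using groebner_pure by blast
    then show "g \<in> ?G \<union> {g \<in> GB. pure_poly True g}" using g by (cases b) auto
  qed
  then show "GB = ?G \<union> pstar cj ` ?H" by (auto simp: image_image)
qed

end

end

lemma reduced_groebner_basis_analytic_split:
  fixes lt :: "'v word \<Rightarrow> 'v word \<Rightarrow> bool" and cj :: "'a::field \<Rightarrow> 'a"
  assumes "monomial_order lt" and "conjugation cj"
  shows "\<forall>S GB. (\<forall>p\<in>S. p \<in> polys \<and> p \<noteq> pzero \<and> analytic_poly p) \<and>
      reduced_groebner_basis lt (star_ideal_generated cj S) GB \<longrightarrow>
      (\<exists>G H. G \<subseteq> polys \<and> H \<subseteq> polys \<and> (\<forall>p\<in>G \<union> H. analytic_poly p) \<and>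
        GB = G \<union> pstar cj ` H)"
proof (intro allI impI, elim conjE)
  fix S :: "('v word \<Rightarrow> 'a) set" and GB
  assume S: "\<forall>p\<in>S. p \<in> polys \<and> p \<noteq> pzero \<and> analytic_poly p"
    and GB: "reduced_groebner_basis lt (star_ideal_generated cj S) GB"
  interpret analytic_generated lt cj S
    using assms S by (auto simp: analytic_generated_def monomial_ordered_def analytic_generated_axioms_def)
  show "\<exists>G H. G \<subseteq> polys \<and> H \<subseteq> polys \<and> (\<forall>p\<in>G \<union> H. analytic_poly p) \<and>
      GB = G \<union> pstar cj ` H"
    using GB by (rule groebner_analytic_split)
qed

interpretation real_conjugation: conjugation "\<lambda>x::real. x"
  by unfold_locales simp_all

interpretation complex_conjugation: conjugation cnj
  by unfold_locales simp_all

theorem proposition4p1: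
  fixes lt :: "('v::finite) word \<Rightarrow> 'v word \<Rightarrow> bool"
  assumes "monomial_order lt"
  shows
   "(\<forall>(S :: ('v word \<Rightarrow> real) set) GB.
       (\<forall>p\<in>S. p \<in> polys \<and> p \<noteq> pzero \<and> analytic_poly p) \<and>
       reduced_groebner_basis lt (star_ideal_generated (\<lambda>x. x) S) GB \<longrightarrow>
       (\<exists>G H. G \<subseteq> polys \<and> H \<subseteq> polys \<and> (\<forall>p\<in>G \<union> H. analytic_poly p) \<and>
              GB = G \<union> pstar (\<lambda>x. x) ` H)) \<and>
    (\<forall>(S :: ('v word \<Rightarrow> complex) set) GB.
       (\<forall>p\<in>S. p \<in> polys \<and> p \<noteq> pzero \<and> analytic_poly p) \<and>
       reduced_groebner_basis lt (star_ideal_generated cnj S) GB \<longrightarrow>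
       (\<exists>G H. G \<subseteq> polys \<and> H \<subseteq> polys \<and> (\<forall>p\<in>G \<union> H. analytic_poly p) \<and>
              GB = G \<union> pstar cnj ` H))"
  using reduced_groebner_basis_analytic_split[OF assms real_conjugation.conjugation_axioms]
    reduced_groebner_basis_analytic_split[OF assms complex_conjugation.conjugation_axioms]
  by (rule conjI)

end
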